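(* The chronology $\ll_C$ on $\bar M$ is weakly distinguishing: for $\bar P,\bar Q\in\bar M$, one has $I^+_C(\bar P)=I^+_C(\bar Q)$ and $I^-_C(\bar P)=I^-_C(\bar Q)$ if and only if $\bar P=\bar Q$.
   Context: Let $M$ be a strongly causal spacetime (a time-oriented Lorentzian manifold in which every point has a neighbourhood that no non-spacelike curve enters more than once). $I^\pm(p)$ denotes the chronological future/past of $p\in M$, and $I^\pm(S)=\bigcup_{s\in S}I^\pm(s)$. A past-set is a set $I^-(S)$ with $S\subset M$. An IP is a nonempty past-set that is not the union of two proper subsets which are past-sets. IFs are defined dually. For an IP $P$, $f(P)=I^+(\{x:P\subset I^-(x)\})$. For an IF $P^*$, $p(P^* )=I^-(\{x:P^*\subset I^+(x)\})$. $R_{pf}$ is the set of pairs $(P,Q^* )$ (with $P$ an IP and $Q^*$ an IF) such that both of the following hold: - $Q^*$ is a maximal IF (under inclusion) contained in $f(P)$; - $P$ is a maximal IP contained in $p(Q^* )$. $\bar M$ is the set of pairs $\bar P=(P,P^* )$ such that one of the following holds: - $(P,P^* )\in R_{pf}$; - $P=\emptyset$ and $P^*$ is an IF occurring in no pair of $R_{pf}$; - $P^*=\emptyset$ and $P$ is an IP occurring in no pair of $R_{pf}$. $M$ is identified with its image under the injection $p\mapsto(I^-(p),I^+(p))\in\bar M$. On $\bar M$, $\bar P\ll_C\bar Q$ if and only if $P^*\cap Q\neq\emptyset$. For $\bar P\in\bar M$, $I^+_C(\bar P)=\{\bar Q\in\bar M:\bar P\ll_C\bar Q\}$ and $I^-_C(\bar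 P)=\{\bar Q\in\bar M:\bar Q\ll_C\bar P\}$. *)

theory Defs
  imports "HOL-Analysis.Analysis"
begin

text \<open>The points of the spacetime M form the type 'a (a Hausdorff topological space),
  and ch x y means x is in the chronological past of y.\<close>

definition strongly_causal_chronology :: "('a::t2_space \<Rightarrow> 'a \<Rightarrow> bool) \<Rightarrow> bool" where
  "strongly_causal_chronology ch \<longleftrightarrow>
     (\<forall>x y z. ch x y \<longrightarrow> ch y z \<longrightarrow> ch x z) \<and>
     (\<forall>x. \<not> ch x x) \<and>
     (\<forall>x z. ch x z \<longrightarrow> (\<exists>y. ch x y \<and> ch y z)) \<and>
     (\<forall>p. open {q. ch p q} \<and> open {q. ch q p}) \<and>
     (\<forall>p. (\<exists>q. ch p q) \<and> (\<exists>q. ch q p)) \<and>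
     (\<forall>p U. open U \<and> p \<in> U \<longrightarrow>
        (\<exists>a b. ch a p \<and> ch p b \<and> {q. ch a q \<and> ch q b} \<subseteq> U))"

definition Ifut :: "('a \<Rightarrow> 'a \<Rightarrow> bool) \<Rightarrow> 'a \<Rightarrow> 'a set" where
  "Ifut ch p = {q. ch p q}"

definition Ipast :: "('a \<Rightarrow> 'a \<Rightarrow> bool) \<Rightarrow> 'a \<Rightarrow> 'a set" where
  "Ipast ch p = {q. ch q p}"

definition IfutS :: "('a \<Rightarrow> 'a \<Rightarrow> bool) \<Rightarrow> 'a set \<Rightarrow> 'a set" where
  "IfutS ch S = (\<Union>s\<in>S. Ifut ch s)"

definition IpastS :: "('a \<Rightarrow> 'a \<Rightarrow> bool) \<Rightarrow> 'a set \<Rightarrow> 'a set" where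
  "IpastS ch S = (\<Union>s\<in>S. Ipast ch s)"

definition past_set :: "('a \<Rightarrow> 'a \<Rightarrow> bool) \<Rightarrow> 'a set \<Rightarrow> bool" where
  "past_set ch A \<longleftrightarrow> (\<exists>S. A = IpastS ch S)"

definition future_set :: "('a \<Rightarrow> 'a \<Rightarrow> bool) \<Rightarrow> 'a set \<Rightarrow> bool" where
  "future_set ch A \<longleftrightarrow> (\<exists>S. A = IfutS ch S)"

definition IP :: "('a \<Rightarrow> 'a \<Rightarrow> bool) \<Rightarrow> 'a set \<Rightarrow> bool" where
  "IP ch P \<longleftrightarrow> P \<noteq> {} \<and> past_set ch P \<and>
     \<not> (\<exists>A B. past_set ch A \<and> past_set ch B \<and> A \<subset> P \<and> B \<subset> P \<and> P = A \<union> B)"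

definition IF :: "('a \<Rightarrow> 'a \<Rightarrow> bool) \<Rightarrow> 'a set \<Rightarrow> bool" where
  "IF ch F \<longleftrightarrow> F \<noteq> {} \<and> future_set ch F \<and>
     \<not> (\<exists>A B. future_set ch A \<and> future_set ch B \<and> A \<subset> F \<and> B \<subset> F \<and> F = A \<union> B)"

definition fP :: "('a \<Rightarrow> 'a \<Rightarrow> bool) \<Rightarrow> 'a set \<Rightarrow> 'a set" where
  "fP ch P = IfutS ch {x. P \<subseteq> Ipast ch x}"

definition pF :: "('a \<Rightarrow> 'a \<Rightarrow> bool) \<Rightarrow> 'a set \<Rightarrow> 'a set" where
  "pF ch F = IpastS ch {x. F \<subseteq> Ifut ch x}"

definition Rpf :: "('a \<Rightarrow> 'a \<Rightarrow> bool) \<Rightarrow> 'a set \<Rightarrow> 'a set \<Rightarrow> bool" where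
  "Rpf ch P F \<longleftrightarrow> IP ch P \<and> IF ch F \<and>
     F \<subseteq> fP ch P \<and> (\<forall>F'. IF ch F' \<and> F' \<subseteq> fP ch P \<and> F \<subseteq> F' \<longrightarrow> F' = F) \<and>
     P \<subseteq> pF ch F \<and> (\<forall>P'. IP ch P' \<and> P' \<subseteq> pF ch F \<and> P \<subseteq> P' \<longrightarrow> P' = P)"

definition Mbar :: "('a \<Rightarrow> 'a \<Rightarrow> bool) \<Rightarrow> ('a set \<times> 'a set) set" where
  "Mbar ch = {(P, F). Rpf ch P F
     \<or> (P = {} \<and> IF ch F \<and> \<not> (\<exists>P'. Rpf ch P' F))
     \<or> (F = {} \<and> IP ch P \<and> \<not> (\<exists>F'. Rpf ch P F'))}"

definition chronC :: "'a set \<times> 'a set \<Rightarrow> 'a set \<times> 'a set \<Rightarrow> bool" where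
  "chronC X Y \<longleftrightarrow> snd X \<inter> fst Y \<noteq> {}"

definition IfutC :: "('a \<Rightarrow> 'a \<Rightarrow> bool) \<Rightarrow> 'a set \<times> 'a set \<Rightarrow> ('a set \<times> 'a set) set" where
  "IfutC ch X = {Y \<in> Mbar ch. chronC X Y}"

definition IpastC :: "('a \<Rightarrow> 'a \<Rightarrow> bool) \<Rightarrow> 'a set \<times> 'a set \<Rightarrow> ('a set \<times> 'a set) set" where
  "IpastC ch X = {Y \<in> Mbar ch. chronC Y X}"

end

theory Submission
  imports Defs
begin

text \<open>For a point y, strong causality makes I^-(y) directed, hence an IP, and dually I^+(y) is an
  IF; so some element of the completion has past component I^-(y) and some has future
  component I^+(y).  By transitivity and interpolation a future set F meets I^-(y) exactly when
  y \<in> F, so (P, F) \<ll>C (I^-(y), _) holds iff y \<in> F: the chronological future of an element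
  determines its future component pointwise, and dually its chronological past determines its
  past component.  The future statements are the past ones for the reversed chronology, which
  is again strongly causal.\<close>

lemma
  assumes "strongly_causal_chronology ch"
  shows strongly_causal_chronology_transp: "transp ch"
    and strongly_causal_chronology_irrefl: "\<not> ch x x"
    and strongly_causal_chronology_interpolate: "ch x z \<Longrightarrow> \<exists>y. ch x y \<and> ch y z"
    and strongly_causal_chronology_open_future: "open {q. ch p q}"
    and strongly_causal_chronology_open_past: "open {q. ch q p}"
    and strongly_causal_chronology_ex_future: "\<exists>q. ch p q"
    and strongly_causal_chronology_ex_past: "\<exists>q. ch q p"
    and strongly_causal_chronology_local_base:
      "open U \<Longrightarrow> p \<in> U \<Longrightarrow> \<exists>a b. ch a p \<and> ch p b \<and> {q. ch a q \<and> ch q b} \<subseteq> U"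
  using assms unfolding strongly_causal_chronology_def by (simp_all add: transp_def)

lemma strongly_causal_chronology_conversep:
  assumes "strongly_causal_chronology ch"
  shows "strongly_causal_chronology ch\<inverse>\<inverse>"
  unfolding strongly_causal_chronology_def conversep_iff
proof (intro conjI allI impI)
  show "ch z y \<Longrightarrow> ch y x \<Longrightarrow> ch z x" for x y z
    using strongly_causal_chronology_transp[OF assms] by (rule transpD)
  show "\<exists>y. ch y x \<and> ch z y" if "ch z x" for x z
    using strongly_causal_chronology_interpolate[OF assms that] by blast
  show "\<exists>a b. ch p a \<and> ch b p \<and> {q. ch q a \<and> ch b q} \<subseteq> U" if "open U \<and> p \<in> U" for p U
  proof -
    have "open U" "p \<in> U" using that by simp_all
    then obtain a b where ab: "ch a p \<and> ch p b \<and> {q. ch a q \<and> ch q b} \<subseteq> U"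
      using strongly_causal_chronology_local_base[OF assms] by meson
    show ?thesis
    proof (intro exI conjI)
      show "ch p b" "ch a p" using ab by simp_all
      show "{q. ch q b \<and> ch a q} \<subseteq> U" using ab by auto
    qed
  qed
  show "\<not> ch x x" for x
    using strongly_causal_chronology_irrefl[OF assms] .
  show "open {q. ch q p}" "open {q. ch p q}" for p
    using strongly_causal_chronology_open_past[OF assms] strongly_causal_chronology_open_future[OF assms] .
  show "\<exists>q. ch q p" "\<exists>q. ch p q" for p
    using strongly_causal_chronology_ex_past[OF assms] strongly_causal_chronology_ex_future[OF assms] .
qed

lemma Ifut_conversep: "Ifut ch = Ipast ch\<inverse>\<inverse>"
  by (simp add: fun_eq_iff Ifut_def Ipast_def)

lemma IfutS_conversep: "IfutS ch = IpastS ch\<inverse>\<inverse>"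
  by (simp add: fun_eq_iff IfutS_def IpastS_def Ifut_conversep)

lemma future_set_conversep: "future_set ch = past_set ch\<inverse>\<inverse>"
  by (simp add: fun_eq_iff future_set_def past_set_def IfutS_conversep)

lemma IF_conversep: "IF ch = IP ch\<inverse>\<inverse>"
  by (simp add: fun_eq_iff IF_def IP_def future_set_conversep)

lemma past_set_downward_closed:
  assumes "transp ch" "past_set ch A" "c \<in> A" "ch a c"
  shows "a \<in> A"
  using assms unfolding past_set_def IpastS_def Ipast_def transp_def by blast

lemma past_set_Ifut_meets_iff:
  assumes "strongly_causal_chronology ch" "past_set ch P"
  shows "Ifut ch y \<inter> P \<noteq> {} \<longleftrightarrow> y \<in> P"
proof
  assume "Ifut ch y \<inter> P \<noteq> {}"
  then obtain z where "ch y z" "z \<in> P" by (auto simp: Ifut_def)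
  then show "y \<in> P"
    using past_set_downward_closed strongly_causal_chronology_transp assms by metis
next
  assume "y \<in> P"
  then obtain S s where S: "P = IpastS ch S" "s \<in> S" "ch y s"
    using assms(2) by (auto simp: past_set_def IpastS_def Ipast_def)
  obtain z where "ch y z" "ch z s"
    using strongly_causal_chronology_interpolate[OF assms(1) S(3)] by blast
  then have "z \<in> Ifut ch y \<inter> P"
    using S by (auto simp: IpastS_def Ipast_def Ifut_def)
  then show "Ifut ch y \<inter> P \<noteq> {}" by blast
qed

lemma future_set_meets_Ipast_iff:
  assumes "strongly_causal_chronology ch" "future_set ch F"
  shows "F \<inter> Ipast ch y \<noteq> {} \<longleftrightarrow> y \<in> F"
  using past_set_Ifut_meets_iff[OF strongly_causal_chronology_conversep[OF assms(1)], of F y]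
    assms(2)
  by (simp add: future_set_conversep Ifut_conversep Int_commute)

lemma IP_if_directed:
  assumes "transp ch" "past_set ch P" "P \<noteq> {}"
    and directed: "\<And>a b. a \<in> P \<Longrightarrow> b \<in> P \<Longrightarrow> \<exists>c\<in>P. ch a c \<and> ch b c"
  shows "IP ch P"
proof -
  have "\<not> (\<exists>A B. past_set ch A \<and> past_set ch B \<and> A \<subset> P \<and> B \<subset> P \<and> P = A \<union> B)"
  proof (intro notI, elim exE conjE)
    fix A B assume "past_set ch A" "past_set ch B" "A \<subset> P" "B \<subset> P" "P = A \<union> B"
    moreover obtain a b where "a \<in> P" "a \<notin> A" "b \<in> P" "b \<notin> B"
      using \<open>A \<subset> P\<close> \<open>B \<subset> P\<close> by blast
    moreover obtain c where "c \<in> P" "ch a c" "ch b c"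
      using directed[OF \<open>a \<in> P\<close> \<open>b \<in> P\<close>] by blast
    ultimately have "a \<in> A \<or> b \<in> B"
      using past_set_downward_closed[OF assms(1)] by (metis Un_iff)
    then show False using \<open>a \<notin> A\<close> \<open>b \<notin> B\<close> by blast
  qed
  then show ?thesis using assms(2,3) by (simp add: IP_def)
qed

lemma Ipast_directed:
  assumes "strongly_causal_chronology ch" "ch a y" "ch b y"
  shows "\<exists>c. ch a c \<and> ch b c \<and> ch c y"
proof -
  have "open ({q. ch a q} \<inter> {q. ch b q})" "y \<in> {q. ch a q} \<inter> {q. ch b q}"
    using assms strongly_causal_chronology_open_future by auto
  then obtain \<alpha> \<beta> where "ch \<alpha> y" "ch y \<beta>"
    and "{q. ch \<alpha> q \<and> ch q \<beta>} \<subseteq> {q. ch a q} \<inter> {q. ch b q}"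
    using strongly_causal_chronology_local_base[OF assms(1)] by meson
  moreover obtain c where "ch \<alpha> c" "ch c y"
    using strongly_causal_chronology_interpolate[OF assms(1) \<open>ch \<alpha> y\<close>] by blast
  moreover have "ch c \<beta>"
    using strongly_causal_chronology_transp[OF assms(1)] \<open>ch c y\<close> \<open>ch y \<beta>\<close>
    by (rule transpD)
  ultimately show ?thesis by blast
qed

lemma IP_Ipast:
  assumes "strongly_causal_chronology ch"
  shows "IP ch (Ipast ch y)"
proof (rule IP_if_directed)
  show "transp ch" using assms by (rule strongly_causal_chronology_transp)
  show "past_set ch (Ipast ch y)"
    unfolding past_set_def by (rule exI[of _ "{y}"]) (simp add: IpastS_def)
  show "Ipast ch y \<noteq> {}"
    using strongly_causal_chronology_ex_past[OF assms] by (auto simp: Ipast_def)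
  fix a b assume "a \<in> Ipast ch y" "b \<in> Ipast ch y"
  then have "ch a y" "ch b y" by (simp_all add: Ipast_def)
  then obtain c where "ch a c" "ch b c" "ch c y"
    using Ipast_directed[OF assms] by blast
  then show "\<exists>c\<in>Ipast ch y. ch a c \<and> ch b c" by (auto simp: Ipast_def)
qed

lemma IF_Ifut:
  assumes "strongly_causal_chronology ch"
  shows "IF ch (Ifut ch y)"
  using IP_Ipast[OF strongly_causal_chronology_conversep[OF assms]]
  by (simp add: IF_conversep Ifut_conversep)

lemma Mbar_past_set_fst:
  assumes "(P, F) \<in> Mbar ch"
  shows "past_set ch P"
proof -
  have "past_set ch {}"
    unfolding past_set_def by (rule exI[of _ "{}"]) (simp add: IpastS_def)
  moreover have "P = {} \<or> IP ch P" using assms unfolding Mbar_def Rpf_def by blast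
  ultimately show ?thesis by (auto simp: IP_def)
qed

lemma Mbar_future_set_snd:
  assumes "(P, F) \<in> Mbar ch"
  shows "future_set ch F"
proof -
  have "future_set ch {}"
    unfolding future_set_def by (rule exI[of _ "{}"]) (simp add: IfutS_def)
  moreover have "F = {} \<or> IF ch F" using assms unfolding Mbar_def Rpf_def by blast
  ultimately show ?thesis by (auto simp: IF_def)
qed

lemma ex_Mbar_fst: "IP ch P \<Longrightarrow> \<exists>F. (P, F) \<in> Mbar ch"
  unfolding Mbar_def by blast

lemma ex_Mbar_snd: "IF ch F \<Longrightarrow> \<exists>P. (P, F) \<in> Mbar ch"
  unfolding Mbar_def by blast

lemma Ipast_in_IfutC_iff:
  assumes "strongly_causal_chronology ch" "X \<in> Mbar ch" "(Ipast ch y, F) \<in> Mbar ch"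
  shows "(Ipast ch y, F) \<in> IfutC ch X \<longleftrightarrow> y \<in> snd X"
  using assms future_set_meets_Ipast_iff[OF assms(1) Mbar_future_set_snd]
  by (cases X) (simp add: IfutC_def chronC_def)

lemma Ifut_in_IpastC_iff:
  assumes "strongly_causal_chronology ch" "X \<in> Mbar ch" "(P, Ifut ch y) \<in> Mbar ch"
  shows "(P, Ifut ch y) \<in> IpastC ch X \<longleftrightarrow> y \<in> fst X"
  using assms past_set_Ifut_meets_iff[OF assms(1) Mbar_past_set_fst]
  by (cases X) (simp add: IpastC_def chronC_def)

theorem theorem4:
  fixes ch :: "'a::t2_space \<Rightarrow> 'a \<Rightarrow> bool"
  assumes "strongly_causal_chronology ch"
    and "X \<in> Mbar ch" and "Y \<in> Mbar ch"
  shows "(IfutC ch X = IfutC ch Y \<and> IpastC ch X = IpastC ch Y) \<longleftrightarrow> X = Y"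
proof
  assume same: "IfutC ch X = IfutC ch Y \<and> IpastC ch X = IpastC ch Y"
  have "snd X = snd Y"
  proof (rule set_eqI)
    fix y
    obtain F where Z: "(Ipast ch y, F) \<in> Mbar ch"
      using ex_Mbar_fst IP_Ipast[OF assms(1)] by blast
    show "y \<in> snd X \<longleftrightarrow> y \<in> snd Y"
      using Ipast_in_IfutC_iff[OF assms(1,2) Z] Ipast_in_IfutC_iff[OF assms(1,3) Z] same
      by simp
  qed
  moreover have "fst X = fst Y"
  proof (rule set_eqI)
    fix y
    obtain P where Z: "(P, Ifut ch y) \<in> Mbar ch"
      using ex_Mbar_snd IF_Ifut[OF assms(1)] by blast
    show "y \<in> fst X \<longleftrightarrow> y \<in> fst Y"
      using Ifut_in_IpastC_iff[OF assms(1,2) Z] Ifut_in_IpastC_iff[OF assms(1,3) Z] same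
      by simp
  qed
  ultimately show "X = Y" by (simp add: prod_eq_iff)
qed simp

end
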